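(* Let $\lambda$ be a partition of $n$. The number of connected components of the graph $\mathcal A_\lambda$ is at most $d_\lambda$.
   Context: Fix $n\ge1$; $\overline i=i+n\mathbb Z$, $[\overline n]=\{\overline1,\dots,\overline n\}$. A tabloid of shape $\lambda$ is a sequence $(T_1,\dots,T_{\ell(\lambda)})$ of pairwise disjoint subsets of $[\overline n]$ with $|T_r|=\lambda_r$ and union $[\overline n]$ (row 1 highest). $\tau(T)=\{\overline i:\overline i\text{ lies in a strictly higher row than }\overline{i+1}\}$. $T,T'$ are connected by a Knuth move if $T'$ is obtained from $T$ by exchanging $\overline i$ and $\overline{i+1}$ for some $i$ and neither of $\tau(T),\tau(T')$ contains the other. $\mathcal A_\lambda$ is the graph on tabloids of shape $\lambda$ whose edges are Knuth moves. $d_\lambda=\gcd(\lambda'_1,\lambda'_2,\dots)$ with $\lambda'$ the conjugate partition. *)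

theory Defs
  imports Main
begin

text \<open>Residues mod n are represented by 0,...,n-1; the successor of i is (i+1) mod n.
  Partitions are weakly decreasing lists of positive naturals; rows are 0-indexed,
  row 0 being the highest.\<close>

definition is_partition :: "nat list \<Rightarrow> nat \<Rightarrow> bool" where
  "is_partition lam n \<longleftrightarrow> sorted_wrt (\<ge>) lam \<and> 0 \<notin> set lam \<and> sum_list lam = n"

definition res_succ :: "nat \<Rightarrow> nat \<Rightarrow> nat" where
  "res_succ n i = (i + 1) mod n"

definition tabloids :: "nat \<Rightarrow> nat list \<Rightarrow> nat set list set" where
  "tabloids n lam = {T. length T = length lam
      \<and> (\<forall>r < length lam. card (T ! r) = lam ! r)
      \<and> (\<forall>r < length lam. \<forall>s < length lam. r \<noteq> s \<longrightarrow> T ! r \<inter> T ! s = {})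
      \<and> \<Union> (set T) = {0..<n}}"

definition strictly_higher :: "nat set list \<Rightarrow> nat \<Rightarrow> nat \<Rightarrow> bool" where
  "strictly_higher T a b \<longleftrightarrow> (\<exists>r s. r < s \<and> s < length T \<and> a \<in> T ! r \<and> b \<in> T ! s)"

definition tau :: "nat \<Rightarrow> nat set list \<Rightarrow> nat set" where
  "tau n T = {i \<in> {0..<n}. strictly_higher T i (res_succ n i)}"

definition swap_el :: "nat \<Rightarrow> nat \<Rightarrow> nat \<Rightarrow> nat" where
  "swap_el a b x = (if x = a then b else if x = b then a else x)"

definition exchange :: "nat \<Rightarrow> nat \<Rightarrow> nat set list \<Rightarrow> nat set list" where
  "exchange n i T = map (\<lambda>A. swap_el i (res_succ n i) ` A) T"

definition knuth_move :: "nat \<Rightarrow> nat set list \<Rightarrow> nat set list \<Rightarrow> bool" where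
  "knuth_move n T T' \<longleftrightarrow> (\<exists>i \<in> {0..<n}. T' = exchange n i T
      \<and> \<not> tau n T \<subseteq> tau n T' \<and> \<not> tau n T' \<subseteq> tau n T)"

definition knuth_edges :: "nat \<Rightarrow> nat list \<Rightarrow> (nat set list \<times> nat set list) set" where
  "knuth_edges n lam = {(T, T'). T \<in> tabloids n lam \<and> T' \<in> tabloids n lam
      \<and> (knuth_move n T T' \<or> knuth_move n T' T)}"

definition num_components :: "nat \<Rightarrow> nat list \<Rightarrow> nat" where
  "num_components n lam = card (tabloids n lam // ((knuth_edges n lam)\<^sup>*))"

text \<open>Conjugate partition: lam'_j = number of parts \<ge> j (j \<ge> 1).\<close>
definition conj_part :: "nat list \<Rightarrow> nat \<Rightarrow> nat" where
  "conj_part lam j = length (filter (\<lambda>x. j \<le> x) lam)"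

definition d_lam :: "nat list \<Rightarrow> nat" where
  "d_lam lam = Gcd (conj_part lam ` {1..sum_list lam})"

end

theory Submission
  imports Defs "HOL-Library.Multiset"
begin

text \<open>
  Encode a tabloid by the word w whose i-th letter is the row containing i. Then tau
  is the set of cyclic ascents of w, exchanging i and i+1 swaps two cyclically adjacent
  letters, and this swap is a Knuth move as soon as a cyclic neighbour of the pair carries
  a letter lying between the two swapped ones. So the elementary Knuth relations, applied
  to any rotation of a word, never leave a component of the graph.

  Up to these relations every word is a rotation of its weakly decreasing rearrangement;
  hence all words of content lam are reached from the rotations of one fixed word W. For W
  take the column reading word of the diagram of lam: a column [0..<lam'_j] commutes with
  all smaller letters, which makes rotation by lam'_j, and therefore by
  d_lam = gcd(lam'_1, lam'_2, ...), an equivalence on W. Thus the rotations of W by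
  0, ..., d_lam - 1 meet every component.
\<close>

lemma mset_rotate [simp]: "mset (rotate k xs) = mset xs"
  by (metis append_take_drop_id mset_append rotate_drop_take union_commute)

lemma rotate_inj: "rotate k xs = rotate k ys \<Longrightarrow> xs = ys"
  unfolding rotate_def by (metis inj_eq inj_fn inj_rotate1)

lemma rotate_back: "rotate (length xs - k mod length xs) (rotate k xs) = xs"
proof (cases "xs = []")
  case False
  then have "(length xs - k mod length xs + k) mod length xs = 0"
    by (metis add.commute le_add_diff_inverse mod_add_left_eq mod_le_divisor mod_self length_greater_0_conv)
  then show ?thesis by (metis rotate_rotate rotate_conv_mod rotate0 id_apply)
qed simp

lemma mod_add_left_inj:
  fixes k t u n :: nat
  assumes "t < n" "u < n"
  shows "(k + t) mod n = (k + u) mod n \<longleftrightarrow> t = u"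
proof
  assume eq: "(k + t) mod n = (k + u) mod n"
  have "a = b" if "a \<le> b" "b < n" "(k + a) mod n = (k + b) mod n" for a b
  proof -
    have "n dvd b - a" using that mod_eq_dvd_iff_nat[of "k + a" "k + b" n] by simp
    then show ?thesis using that nat_dvd_not_less[of "b - a" n] by (cases "a < b") auto
  qed
  then show "t = u" using assms eq by (metis le_cases)
qed simp

lemma res_succ_mod: "res_succ n (m mod n) = Suc m mod n"
  unfolding res_succ_def by (simp add: mod_Suc_eq)

lemma rotate_adjacent_swap:
  fixes k :: nat
  assumes len: "length w = n" and u: "Suc u < n"
  defines "i \<equiv> (k + u) mod n" and "j \<equiv> (k + Suc u) mod n"
  shows "rotate k (w[i := w ! j, j := w ! i])
    = (rotate k w)[u := rotate k w ! Suc u, Suc u := rotate k w ! u]"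
proof (rule nth_equalityI)
  fix t assume "t < length (rotate k (w[i := w ! j, j := w ! i]))"
  then have t: "t < n" using len by simp
  have "i < n" "j < n" using u unfolding i_def j_def by simp_all
  have "(k + t) mod n = i \<longleftrightarrow> t = u" "(k + t) mod n = j \<longleftrightarrow> t = Suc u"
    using mod_add_left_inj[where k = k and t = t and u = u] mod_add_left_inj[where k = k and t = t and u = "Suc u"]
      t u
    unfolding i_def j_def by simp_all
  then show "rotate k (w[i := w ! j, j := w ! i]) ! t
      = (rotate k w)[u := rotate k w ! Suc u, Suc u := rotate k w ! u] ! t"
    using t u len \<open>i < n\<close> \<open>j < n\<close>
    by (auto simp: nth_rotate nth_list_update i_def j_def)
qed simp

lemma sort_eq_if_mset_eq: "mset xs = mset ys \<Longrightarrow> sort xs = sort ys"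
  by (metis sorted_list_of_multiset_mset)

lemma rev_sort_decreasing: "sorted_wrt (\<ge>) xs \<Longrightarrow> rev (sort xs) = xs"
  by (metis mset_rev properties_for_sort rev_rev_ident sorted_wrt_rev)

lemma image_involution_Collect:
  assumes "\<And>x. f (f x) = x"
  shows "f ` {t. P t} = {t. P (f t)}"
proof
  show "f ` {t. P t} \<subseteq> {t. P (f t)}" using assms by auto
  show "{t. P (f t)} \<subseteq> f ` {t. P t}"
  proof
    fix t assume "t \<in> {t. P (f t)}"
    then show "t \<in> f ` {t. P t}" using assms by (metis image_eqI mem_Collect_eq)
  qed
qed

lemma swap_el_involution: "swap_el a b (swap_el a b x) = x"
  unfolding swap_el_def by simp

lemma card_quotient_rtrancl_le:
  assumes "sym r" and "finite B" and "\<forall>a\<in>A. \<exists>b\<in>B. (a, b) \<in> r\<^sup>*"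
  shows "card (A // r\<^sup>*) \<le> card B"
proof -
  have "A // r\<^sup>* \<subseteq> (\<lambda>b. r\<^sup>* `` {b}) ` B"
  proof
    fix X assume "X \<in> A // r\<^sup>*"
    then obtain a b where "X = r\<^sup>* `` {a}" "b \<in> B" "(a, b) \<in> r\<^sup>*"
      using assms(3) unfolding quotient_def by blast
    moreover have "(b, a) \<in> r\<^sup>*" using \<open>(a, b) \<in> r\<^sup>*\<close> sym_rtrancl[OF assms(1)]
      by (meson symD)
    ultimately show "X \<in> (\<lambda>b. r\<^sup>* `` {b}) ` B" by (auto intro: rtrancl_trans)
  qed
  then show ?thesis using assms(2) by (meson card_image_le card_mono finite_imageI le_trans)
qed

section \<open>Knuth relations and their cyclic closure\<close>

inductive knuth_step :: "nat list \<Rightarrow> nat list \<Rightarrow> bool" where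
  left: "min b c \<le> a \<Longrightarrow> a < max b c \<Longrightarrow> knuth_step (p @ [a, b, c] @ q) (p @ [a, c, b] @ q)"
| right: "min b c < d \<Longrightarrow> d \<le> max b c \<Longrightarrow> knuth_step (p @ [b, c, d] @ q) (p @ [c, b, d] @ q)"

abbreviation knuth_equiv :: "nat list \<Rightarrow> nat list \<Rightarrow> bool" where
  "knuth_equiv \<equiv> knuth_step\<^sup>*\<^sup>*"

lemma knuth_step_sym:
  assumes "knuth_step u v"
  shows "knuth_step v u"
  using assms
proof cases
  case (left b c a p q)
  then show ?thesis using knuth_step.left[of c b a p q] by (simp add: min.commute max.commute)
next
  case (right b c d p q)
  then show ?thesis using knuth_step.right[of c b d p q] by (simp add: min.commute max.commute)
qed

lemma knuth_step_mset: "knuth_step u v \<Longrightarrow> mset v = mset u"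
  by (erule knuth_step.cases) (auto simp: add_mset_commute)

lemma knuth_step_append:
  assumes "knuth_step u v"
  shows "knuth_step (x @ u @ y) (x @ v @ y)"
  using assms
proof cases
  case (left b c a p q)
  then show ?thesis using knuth_step.left[of b c a "x @ p" "q @ y"] by simp
next
  case (right b c d p q)
  then show ?thesis using knuth_step.right[of b c d "x @ p" "q @ y"] by simp
qed

lemma knuth_step_adjacent_swap:
  assumes "knuth_step v v'"
  obtains u h where "Suc u < length v" "h < length v" "v' = v[u := v ! Suc u, Suc u := v ! u]"
    "v ! u \<noteq> v ! Suc u"
    "(Suc h = u \<and> min (v ! u) (v ! Suc u) \<le> v ! h \<and> v ! h < max (v ! u) (v ! Suc u))
   \<or> (h = Suc (Suc u) \<and> min (v ! u) (v ! Suc u) < v ! h \<and> v ! h \<le> max (v ! u) (v ! Suc u))"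
  using assms
proof cases
  case (left b c a p q)
  then show ?thesis
    by (intro that[of "Suc (length p)" "length p"]) (auto simp: nth_append list_update_append)
next
  case (right b c d p q)
  then show ?thesis
    by (intro that[of "length p" "Suc (Suc (length p))"]) (auto simp: nth_append list_update_append)
qed

lemma knuth_equiv_sym: "knuth_equiv u v \<Longrightarrow> knuth_equiv v u"
  by (induction rule: rtranclp_induct) (auto intro: knuth_step_sym converse_rtranclp_into_rtranclp)

lemma knuth_equiv_append: "knuth_equiv u v \<Longrightarrow> knuth_equiv (x @ u @ y) (x @ v @ y)"
  by (induction rule: rtranclp_induct) (auto intro: knuth_step_append rtranclp.rtrancl_into_rtrancl)

definition cyclic_knuth_step :: "nat list \<Rightarrow> nat list \<Rightarrow> bool" where
  "cyclic_knuth_step u v \<longleftrightarrow> (\<exists>k. knuth_step (rotate k u) (rotate k v))"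

abbreviation cyclic_knuth_equiv :: "nat list \<Rightarrow> nat list \<Rightarrow> bool" where
  "cyclic_knuth_equiv \<equiv> cyclic_knuth_step\<^sup>*\<^sup>*"

lemma knuth_step_imp_cyclic: "knuth_step u v \<Longrightarrow> cyclic_knuth_step u v"
  unfolding cyclic_knuth_step_def by (metis rotate0 id_apply)

lemma cyclic_knuth_step_sym: "cyclic_knuth_step u v \<Longrightarrow> cyclic_knuth_step v u"
  unfolding cyclic_knuth_step_def using knuth_step_sym by blast

lemma cyclic_knuth_step_mset: "cyclic_knuth_step u v \<Longrightarrow> mset v = mset u"
  unfolding cyclic_knuth_step_def by (metis knuth_step_mset mset_rotate)

lemma cyclic_knuth_step_rotate:
  assumes "cyclic_knuth_step u v"
  shows "cyclic_knuth_step (rotate j u) (rotate j v)"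
proof -
  obtain k where k: "knuth_step (rotate k u) (rotate k v)"
    using assms unfolding cyclic_knuth_step_def by blast
  define k' where "k' = k + (length u - j mod length u)"
  have "length v = length u"
    using knuth_step_mset[OF k] by (metis length_rotate mset_eq_length)
  moreover have "rotate k' (rotate j xs) = rotate k xs" if "length xs = length u" for xs :: "nat list"
    unfolding k'_def using rotate_back[of xs j] that by (metis rotate_rotate)
  ultimately show ?thesis unfolding cyclic_knuth_step_def using k by metis
qed

lemma cyclic_knuth_equiv_sym: "cyclic_knuth_equiv u v \<Longrightarrow> cyclic_knuth_equiv v u"
  by (induction rule: rtranclp_induct)
    (auto intro: cyclic_knuth_step_sym converse_rtranclp_into_rtranclp)

lemma cyclic_knuth_equiv_rotate:
  "cyclic_knuth_equiv u v \<Longrightarrow> cyclic_knuth_equiv (rotate j u) (rotate j v)"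
  by (induction rule: rtranclp_induct) (auto intro: cyclic_knuth_step_rotate rtranclp.rtrancl_into_rtrancl)

lemma cyclic_knuth_equiv_mset: "cyclic_knuth_equiv u v \<Longrightarrow> mset v = mset u"
  by (induction rule: rtranclp_induct) (auto dest: cyclic_knuth_step_mset)

lemma knuth_equiv_imp_cyclic: "knuth_equiv u v \<Longrightarrow> cyclic_knuth_equiv u v"
  by (induction rule: rtranclp_induct) (auto intro: knuth_step_imp_cyclic rtranclp.rtrancl_into_rtrancl)

section \<open>Sorting up to rotation\<close>

lemma knuth_equiv_letter_through_column:
  "x < l \<Longrightarrow> i \<le> l \<Longrightarrow> knuth_equiv ([0..<i] @ [x] @ [i..<l]) ([0..<l] @ [x])"
proof (induction "l - i" arbitrary: i)
  case 0
  then show ?case by simp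
next
  case (Suc m)
  then have "i < l" by simp
  have split_i: "[i..<l] = i # [Suc i..<l]" using \<open>i < l\<close> upt_conv_Cons by blast
  have IH: "knuth_equiv ([0..<Suc i] @ [x] @ [Suc i..<l]) ([0..<l] @ [x])"
    using Suc.hyps(1)[of "Suc i"] Suc.hyps(2) Suc.prems \<open>i < l\<close> by simp
  have step: "knuth_step ([0..<i] @ [x] @ [i..<l]) ([0..<Suc i] @ [x] @ [Suc i..<l])"
    if ne: "x \<noteq> i"
  proof (cases "i < x")
    case True
    then have "[Suc i..<l] = Suc i # [Suc (Suc i)..<l]" using Suc.prems upt_conv_Cons by simp
    then show ?thesis
      using knuth_step.right[of x i "Suc i" "[0..<i]" "[Suc (Suc i)..<l]"] True split_i by simp
  next
    case False
    then obtain j where j: "i = Suc j" using ne False by (cases i) auto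
    then show ?thesis
      using knuth_step.left[of x i j "[0..<j]" "[Suc i..<l]"] False ne split_i by simp
  qed
  show ?case
  proof (cases "x = i")
    case True
    then show ?thesis using IH split_i by simp
  next
    case False
    then show ?thesis using step IH by (meson converse_rtranclp_into_rtranclp)
  qed
qed

lemma knuth_equiv_column_commute:
  "set u \<subseteq> {..<l} \<Longrightarrow> knuth_equiv ([0..<l] @ u) (u @ [0..<l])"
proof (induction u)
  case Nil
  then show ?case by simp
next
  case (Cons x u)
  have "knuth_equiv ([0..<l] @ [x] @ u) ([x] @ [0..<l] @ u)"
    using knuth_equiv_append[OF knuth_equiv_sym[OF knuth_equiv_letter_through_column[of x l 0]], of "[]" u]
      Cons.prems by simp
  moreover have "knuth_equiv ([x] @ [0..<l] @ u) ([x] @ u @ [0..<l])"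
    using knuth_equiv_append[OF Cons.IH, of "[x]" "[]"] Cons.prems by simp
  ultimately show ?case by simp
qed

lemma knuth_equiv_append_past_smaller:
  "sorted_wrt (\<ge>) (y # Q) \<Longrightarrow> y < x \<Longrightarrow> knuth_equiv (y # Q @ [x]) (y # x # Q)"
proof (induction Q rule: rev_induct)
  case Nil
  then show ?case by simp
next
  case (snoc q Q)
  define a where "a = last (y # Q)"
  have "q \<le> a" "a \<le> y" using snoc.prems(1) unfolding a_def by (auto simp: sorted_wrt_append)
  then have "knuth_step (butlast (y # Q) @ [a, q, x] @ []) (butlast (y # Q) @ [a, x, q] @ [])"
    using snoc.prems(2) by (intro knuth_step.left) auto
  then have "knuth_step (y # (Q @ [q]) @ [x]) ((y # Q @ [x]) @ [q])"
    unfolding a_def by (metis append.assoc append_Cons append_Nil append_butlast_last_id list.distinct(1))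
  moreover have "knuth_equiv ((y # Q @ [x]) @ [q]) ((y # x # Q) @ [q])"
    using knuth_equiv_append[OF snoc.IH, of "[]" "[q]"] snoc.prems by (simp add: sorted_wrt_append)
  ultimately show ?case by (simp add: converse_rtranclp_into_rtranclp)
qed

lemma knuth_equiv_prepend_past_larger:
  "sorted_wrt (\<ge>) (A @ [z]) \<Longrightarrow> y < z \<Longrightarrow> knuth_equiv (A @ [y, z]) (y # A @ [z])"
proof (induction A arbitrary: z rule: rev_induct)
  case Nil
  then show ?case by simp
next
  case (snoc a A)
  have "z \<le> a" using snoc.prems(1) by (simp add: sorted_wrt_append)
  then have "knuth_step (A @ [a, y, z] @ []) (A @ [y, a, z] @ [])"
    using snoc.prems(2) by (intro knuth_step.right) auto
  moreover have "knuth_equiv (A @ [y, a]) (y # A @ [a])"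
    using snoc.IH[of a] snoc.prems \<open>z \<le> a\<close> by (simp add: sorted_wrt_append)
  then have "knuth_equiv ([] @ (A @ [y, a]) @ [z]) ([] @ (y # A @ [a]) @ [z])"
    by (rule knuth_equiv_append)
  ultimately show ?case by (simp add: converse_rtranclp_into_rtranclp)
qed

lemma knuth_equiv_row_bump:
  assumes "sorted_wrt (\<ge>) (A @ y # Q)" "\<forall>a\<in>set A. x \<le> a" "y < x"
  shows "knuth_equiv (A @ y # Q @ [x]) (y # A @ x # Q)"
proof -
  have "knuth_equiv (y # Q @ [x]) (y # x # Q)"
    using knuth_equiv_append_past_smaller assms by (simp add: sorted_wrt_append)
  then have "knuth_equiv (A @ (y # Q @ [x]) @ []) (A @ (y # x # Q) @ [])"
    by (rule knuth_equiv_append)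
  moreover have "sorted_wrt (\<ge>) (A @ [x])" using assms by (simp add: sorted_wrt_append)
  then have "knuth_equiv (A @ [y, x]) (y # A @ [x])"
    using knuth_equiv_prepend_past_larger assms(3) by blast
  then have "knuth_equiv ([] @ (A @ [y, x]) @ Q) ([] @ (y # A @ [x]) @ Q)"
    by (rule knuth_equiv_append)
  ultimately show ?thesis by simp
qed

lemma cyclic_knuth_equiv_bump_to_end:
  assumes "sorted_wrt (\<ge>) (A @ y # Q)" "\<forall>a\<in>set A. x \<le> a" "y < x"
  shows "cyclic_knuth_equiv (A @ y # Q @ x # R) (rotate (length (A @ x # Q @ R)) (A @ x # Q @ R @ [y]))"
proof -
  have "knuth_equiv ([] @ (A @ y # Q @ [x]) @ R) ([] @ (y # A @ x # Q) @ R)"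
    by (rule knuth_equiv_append[OF knuth_equiv_row_bump[OF assms]])
  moreover have "y # A @ x # Q @ R = rotate (length (A @ x # Q @ R)) (A @ x # Q @ R @ [y])"
    using rotate_append[of "A @ x # Q @ R" "[y]"] by simp
  ultimately show ?thesis using knuth_equiv_imp_cyclic by simp
qed

lemma cyclic_knuth_equiv_rotate_sort_append:
  "sorted_wrt (\<ge>) P \<Longrightarrow> \<exists>k. cyclic_knuth_equiv (P @ R) (rotate k (rev (sort (P @ R))))"
proof (induction "sum_list (map Suc R)" arbitrary: P R rule: less_induct)
  case less
  show ?case
  proof (cases R)
    case Nil
    then show ?thesis using rev_sort_decreasing[OF less.prems]
      by (metis append_Nil2 rotate0 id_apply rtranclp.rtrancl_refl)
  next
    case (Cons x R')
    show ?thesis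
    proof (cases "\<forall>a\<in>set P. x \<le> a")
      case True
      then have "sorted_wrt (\<ge>) (P @ [x])" using less.prems by (simp add: sorted_wrt_append)
      then show ?thesis using less.hyps[of R' "P @ [x]"] Cons by simp
    next
      case False
      then have "\<exists>a\<in>set P. a < x" by (auto simp: not_le)
      then obtain A y Q where P: "P = A @ y # Q" and "y < x" and "\<forall>a\<in>set A. \<not> a < x"
        by (rule split_list_first_propE)
      then have A: "\<forall>a\<in>set A. x \<le> a" by auto
      have "\<forall>q\<in>set Q. q \<le> y" using less.prems unfolding P by (simp add: sorted_wrt_append)
      then have "sorted_wrt (\<ge>) (A @ x # Q)"
        using less.prems \<open>y < x\<close> A unfolding P by (auto simp: sorted_wrt_append)
      moreover have "sum_list (map Suc (R' @ [y])) < sum_list (map Suc R)"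
        using Cons \<open>y < x\<close> by simp
      ultimately obtain k where
        "cyclic_knuth_equiv (A @ x # Q @ R' @ [y]) (rotate k (rev (sort (A @ x # Q @ R' @ [y]))))"
        using less.hyps by fastforce
      moreover have "sort (A @ x # Q @ R' @ [y]) = sort (P @ R)"
        by (rule sort_eq_if_mset_eq) (simp add: P Cons ac_simps)
      ultimately have "cyclic_knuth_equiv (A @ x # Q @ R' @ [y]) (rotate k (rev (sort (P @ R))))"
        by simp
      from cyclic_knuth_equiv_rotate[OF this, of "length (A @ x # Q @ R')"]
        cyclic_knuth_equiv_bump_to_end[OF less.prems[unfolded P] A \<open>y < x\<close>, of R']
      show ?thesis unfolding P Cons by (metis rotate_rotate rtranclp_trans append.assoc append_Cons)
    qed
  qed
qed

lemma cyclic_knuth_equiv_rotate_sort: "\<exists>k. cyclic_knuth_equiv w (rotate k (rev (sort w)))"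
  using cyclic_knuth_equiv_rotate_sort_append[of "[]" w] by simp

lemma cyclic_knuth_equiv_rotation_if_mset_eq:
  assumes "mset w = mset W"
  shows "\<exists>m. cyclic_knuth_equiv w (rotate m W)"
proof -
  obtain k where k: "cyclic_knuth_equiv w (rotate k (rev (sort W)))"
    using cyclic_knuth_equiv_rotate_sort[of w] sort_eq_if_mset_eq[OF assms] by auto
  obtain k' where "cyclic_knuth_equiv W (rotate k' (rev (sort W)))"
    using cyclic_knuth_equiv_rotate_sort by blast
  from cyclic_knuth_equiv_rotate[OF this, of "length W - k' mod length W"]
  have "cyclic_knuth_equiv (rev (sort W)) (rotate (length W - k' mod length W) W)"
    using rotate_back[of "rev (sort W)" k'] cyclic_knuth_equiv_sym by simp
  from cyclic_knuth_equiv_rotate[OF this, of k] k show ?thesis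
    by (metis rotate_rotate rtranclp_trans)
qed

section \<open>Rotations preserving the cyclic Knuth class\<close>

definition cyclic_periods :: "nat list \<Rightarrow> nat set" where
  "cyclic_periods W = {k. cyclic_knuth_equiv W (rotate k W)}"

lemma zero_in_cyclic_periods: "0 \<in> cyclic_periods W"
  unfolding cyclic_periods_def by simp

lemma cyclic_periods_add:
  assumes "a \<in> cyclic_periods W" "b \<in> cyclic_periods W"
  shows "a + b \<in> cyclic_periods W"
proof -
  have "cyclic_knuth_equiv W (rotate a W)" "cyclic_knuth_equiv W (rotate b W)"
    using assms unfolding cyclic_periods_def by simp_all
  from rtranclp_trans[OF this(1) cyclic_knuth_equiv_rotate[OF this(2)]]
  show ?thesis unfolding cyclic_periods_def by (simp add: rotate_rotate)
qed

lemma cyclic_periods_mult: "a \<in> cyclic_periods W \<Longrightarrow> c * a \<in> cyclic_periods W"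
  by (induction c) (auto simp: zero_in_cyclic_periods cyclic_periods_add)

lemma cyclic_periods_diff:
  assumes "a \<in> cyclic_periods W" "b \<in> cyclic_periods W" "b \<le> a"
  shows "a - b \<in> cyclic_periods W"
proof -
  have a: "cyclic_knuth_equiv W (rotate a W)" and b: "cyclic_knuth_equiv W (rotate b W)"
    using assms unfolding cyclic_periods_def by simp_all
  have "cyclic_knuth_equiv (rotate (a - b) W) (rotate a W)"
    using cyclic_knuth_equiv_rotate[OF b, of "a - b"] assms(3) by (simp add: rotate_rotate)
  from rtranclp_trans[OF a cyclic_knuth_equiv_sym[OF this]]
  show ?thesis unfolding cyclic_periods_def by simp
qed

lemma cyclic_periods_gcd:
  assumes a: "a \<in> cyclic_periods W" and b: "b \<in> cyclic_periods W"
  shows "gcd a b \<in> cyclic_periods W"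
proof (cases "a = 0")
  case True
  then show ?thesis using b by simp
next
  case False
  then obtain x y where xy: "a * x = b * y + gcd a b" using bezout_nat by blast
  have "a * x \<in> cyclic_periods W" "b * y \<in> cyclic_periods W"
    using cyclic_periods_mult[OF a, of x] cyclic_periods_mult[OF b, of y] by (simp_all add: mult.commute)
  from cyclic_periods_diff[OF this] show ?thesis using xy by simp
qed

lemma Gcd_in_cyclic_periods:
  "finite A \<Longrightarrow> A \<subseteq> cyclic_periods W \<Longrightarrow> Gcd A \<in> cyclic_periods W"
  by (induction A rule: finite_induct) (simp_all add: zero_in_cyclic_periods cyclic_periods_gcd)

lemma cyclic_knuth_equiv_rotate_mod:
  assumes "d \<in> cyclic_periods W"
  shows "cyclic_knuth_equiv (rotate m W) (rotate (m mod d) W)"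
proof -
  have "cyclic_knuth_equiv W (rotate (m div d * d) W)"
    using cyclic_periods_mult[OF assms] unfolding cyclic_periods_def by simp
  from cyclic_knuth_equiv_rotate[OF this, of "m mod d"]
  have "cyclic_knuth_equiv (rotate (m mod d) W) (rotate m W)"
    by (simp add: rotate_rotate)
  then show ?thesis by (rule cyclic_knuth_equiv_sym)
qed

text \<open>The column commutes with the letters of u, so it can be moved out of the way of
  the rotation inside a cyclic Knuth step.\<close>

lemma cyclic_knuth_step_prepend_column:
  assumes step: "cyclic_knuth_step u u'" and u: "set u \<subseteq> {..<l}"
  shows "cyclic_knuth_equiv ([0..<l] @ u) ([0..<l] @ u')"
proof -
  obtain k where k: "knuth_step (rotate k u) (rotate k u')"
    using step unfolding cyclic_knuth_step_def by blast
  have "mset u' = mset u" by (rule cyclic_knuth_step_mset[OF step])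
  then have len: "length u' = length u" and u': "set u' \<subseteq> {..<l}"
    using u by (metis mset_eq_length, metis set_mset_mset)
  define j where "j = k mod length u"
  define C where "C = [0..<l]"
  have swap_column: "knuth_equiv (C @ take j v @ drop j v) (take j v @ C @ drop j v)"
    if "set v \<subseteq> {..<l}" for v
  proof -
    have "set (take j v) \<subseteq> {..<l}" using that by (meson in_set_takeD subset_iff)
    from knuth_equiv_append[OF knuth_equiv_column_commute[OF this], of "[]" "drop j v"]
    show ?thesis unfolding C_def by simp
  qed
  have "knuth_step (drop j u @ take j u) (drop j u' @ take j u')"
    using k len unfolding j_def by (simp add: rotate_drop_take)
  then have "cyclic_knuth_step (drop j u @ take j u @ C) (drop j u' @ take j u' @ C)"
    using knuth_step_imp_cyclic knuth_step_append[of _ _ "[]" C] by fastforce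
  from cyclic_knuth_step_rotate[OF this, of "length (drop j u)"]
  have middle: "cyclic_knuth_step (take j u @ C @ drop j u) (take j u' @ C @ drop j u')"
    using rotate_append[of "drop j u" "take j u @ C"] rotate_append[of "drop j u'" "take j u' @ C"] len
    by simp
  have column_out: "knuth_equiv (C @ u) (take j u @ C @ drop j u)"
    using swap_column[OF u] by simp
  have column_in: "knuth_equiv (take j u' @ C @ drop j u') (C @ u')"
    using knuth_equiv_sym[OF swap_column[OF u']] by simp
  have "cyclic_knuth_equiv (C @ u) (take j u' @ C @ drop j u')"
    using rtranclp_trans[OF knuth_equiv_imp_cyclic[OF column_out]
        r_into_rtranclp[of cyclic_knuth_step, OF middle]] .
  from rtranclp_trans[OF this knuth_equiv_imp_cyclic[OF column_in]] show ?thesis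
    unfolding C_def .
qed

lemma cyclic_knuth_equiv_prepend_column:
  "cyclic_knuth_equiv u u' \<Longrightarrow> set u \<subseteq> {..<l} \<Longrightarrow>
    cyclic_knuth_equiv ([0..<l] @ u) ([0..<l] @ u')"
proof (induction rule: rtranclp_induct)
  case base
  then show ?case by simp
next
  case (step v v')
  have "set v \<subseteq> {..<l}"
    using step.prems cyclic_knuth_equiv_mset[OF step.hyps(1)] by (metis set_mset_mset)
  with step show ?case
    using rtranclp_trans[OF _ cyclic_knuth_step_prepend_column] by blast
qed

lemma column_length_in_cyclic_periods:
  assumes "set W \<subseteq> {..<l}"
  shows "l \<in> cyclic_periods ([0..<l] @ W)"
proof -
  have "knuth_equiv ([0..<l] @ W) (rotate l ([0..<l] @ W))"
    using knuth_equiv_column_commute[OF assms] by (metis diff_zero length_upt rotate_append)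
  then show ?thesis unfolding cyclic_periods_def by (simp add: knuth_equiv_imp_cyclic)
qed

lemma cyclic_periods_prepend_column:
  assumes k: "k \<in> cyclic_periods W" and W: "set W \<subseteq> {..<l}" and "k \<le> length W"
  shows "k \<in> cyclic_periods ([0..<l] @ W)"
proof -
  define C where "C = [0..<l]"
  have "rotate k W = drop k W @ take k W"
    using \<open>k \<le> length W\<close> by (cases "k = length W") (simp_all add: rotate_drop_take)
  then have "cyclic_knuth_equiv (C @ W) (C @ drop k W @ take k W)"
    using cyclic_knuth_equiv_prepend_column[OF _ W] k unfolding cyclic_periods_def C_def by simp
  moreover have "set (drop k W) \<subseteq> {..<l}" using W by (meson in_set_dropD subset_iff)
  then have "knuth_equiv (C @ drop k W @ take k W) (drop k W @ C @ take k W)"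
    using knuth_equiv_append[OF knuth_equiv_column_commute, of "drop k W" l "[]" "take k W"]
    unfolding C_def by simp
  moreover have "drop k W @ C @ take k W = rotate (k + l) (C @ W)"
    using rotate_append[of "C @ take k W" "drop k W"] \<open>k \<le> length W\<close> unfolding C_def
    by (simp add: add.commute)
  ultimately have "cyclic_knuth_equiv (C @ W) (rotate (k + l) (C @ W))"
    using rtranclp_trans[OF _ knuth_equiv_imp_cyclic] by metis
  then have "k + l \<in> cyclic_periods (C @ W)"
    unfolding cyclic_periods_def by simp
  moreover have "l \<in> cyclic_periods (C @ W)"
    unfolding C_def by (rule column_length_in_cyclic_periods[OF W])
  ultimately show ?thesis using cyclic_periods_diff[of "k + l" _ l] unfolding C_def by simp
qed

section \<open>The column word of a partition\<close>

lemma conj_part_Suc: "1 \<le> j \<Longrightarrow> conj_part lam (Suc j) = conj_part (map (\<lambda>x. x - 1) lam) j"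
  unfolding conj_part_def by (induction lam) auto

lemma conj_part_le_sum_list: "1 \<le> j \<Longrightarrow> conj_part lam j \<le> sum_list lam"
  unfolding conj_part_def by (induction lam) auto

lemma conj_part_le_length: "conj_part lam j \<le> length lam"
  unfolding conj_part_def by simp

lemma conj_part_map_pred_le: "conj_part (map (\<lambda>x. x - 1) lam) 1 \<le> conj_part lam 1"
  unfolding conj_part_def by (induction lam) auto

lemma sum_list_map_pred: "sum_list (map (\<lambda>x. x - 1) lam) + conj_part lam 1 = sum_list lam"
  unfolding conj_part_def by (induction lam) auto

lemma conj_part_one_pos: "sum_list lam \<noteq> 0 \<Longrightarrow> 0 < conj_part lam 1"
  unfolding conj_part_def by (induction lam) auto

lemma conj_part_eq_0: "sum_list lam = 0 \<Longrightarrow> 1 \<le> j \<Longrightarrow> conj_part lam j = 0"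
  unfolding conj_part_def by (induction lam) auto

lemma less_conj_part_one_iff:
  "sorted_wrt (\<ge>) lam \<Longrightarrow> r < length lam \<Longrightarrow> r < conj_part lam 1 \<longleftrightarrow> 0 < lam ! r"
proof (induction lam arbitrary: r)
  case Nil
  then show ?case by simp
next
  case (Cons a lam)
  show ?case
  proof (cases "a = 0")
    case True
    then have "\<forall>x\<in>set lam. x = 0" using Cons.prems(1) by auto
    then have "filter (\<lambda>x. 1 \<le> x) lam = []" by (auto simp: filter_empty_conv)
    moreover have "(a # lam) ! r = 0" using Cons.prems(2) True \<open>\<forall>x\<in>set lam. x = 0\<close>
      by (cases r) auto
    ultimately show ?thesis using True by (simp add: conj_part_def)
  next
    case False
    show ?thesis
    proof (cases r)
      case 0
      then show ?thesis using False by (simp add: conj_part_def)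
    next
      case (Suc r')
      then have "r' < conj_part lam 1 \<longleftrightarrow> 0 < lam ! r'" using Cons by simp
      then show ?thesis using False Suc by (simp add: conj_part_def)
    qed
  qed
qed

text \<open>The word recording the row index of each cell of the Young diagram of lam,
  read column by column from left to right, each column from top to bottom.\<close>

function column_word :: "nat list \<Rightarrow> nat list" where
  "column_word lam = (if sum_list lam = 0 then []
     else [0..<conj_part lam 1] @ column_word (map (\<lambda>x. x - 1) lam))"
  by auto
termination
proof (relation "measure sum_list")
  show "(map (\<lambda>x. x - 1) lam, lam) \<in> measure sum_list" if "sum_list lam \<noteq> 0" for lam
    using sum_list_map_pred[of lam] conj_part_one_pos[OF that] by simp
qed simp

declare column_word.simps [simp del]

lemma column_word_0: "sum_list lam = 0 \<Longrightarrow> column_word lam = []"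
  by (simp add: column_word.simps)

lemma column_word_pos: "sum_list lam \<noteq> 0 \<Longrightarrow>
    column_word lam = [0..<conj_part lam 1] @ column_word (map (\<lambda>x. x - 1) lam)"
  by (simp only: column_word.simps[of lam] if_False)

lemma length_column_word: "length (column_word lam) = sum_list lam"
proof (induction lam rule: column_word.induct)
  case (1 lam)
  then show ?case
    using sum_list_map_pred[of lam] by (cases "sum_list lam = 0") (simp_all add: column_word_0 column_word_pos)
qed

lemma set_column_word: "set (column_word lam) \<subseteq> {..<conj_part lam 1}"
proof (induction lam rule: column_word.induct)
  case (1 lam)
  then show ?case
    using conj_part_map_pred_le[of lam]
    by (cases "sum_list lam = 0") (auto simp: column_word_0 column_word_pos)
qed

lemma count_column_word:
  "sorted_wrt (\<ge>) lam \<Longrightarrow>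
    count (mset (column_word lam)) r = (if r < length lam then lam ! r else 0)"
proof (induction lam rule: column_word.induct)
  case (1 lam)
  show ?case
  proof (cases "sum_list lam = 0")
    case True
    then show ?thesis by (auto simp: column_word_0)
  next
    case False
    define mu where "mu = map (\<lambda>x. x - 1) lam"
    have "sorted_wrt (\<ge>) mu" unfolding mu_def using "1.prems"
      by (auto simp: sorted_wrt_map elim: sorted_wrt_mono_rel[rotated])
    then have IH: "count (mset (column_word mu)) r = (if r < length lam then lam ! r - 1 else 0)"
      using "1.IH"[OF False] unfolding mu_def by simp
    show ?thesis
    proof (cases "r < length lam")
      case True
      then show ?thesis using False IH less_conj_part_one_iff[OF "1.prems" True]
        by (auto simp: column_word_pos mu_def)
    next
      case False
      then show ?thesis using \<open>sum_list lam \<noteq> 0\<close> IH conj_part_le_length[of lam 1]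
        by (auto simp: column_word_pos mu_def)
    qed
  qed
qed

lemma conj_part_in_cyclic_periods:
  "1 \<le> j \<Longrightarrow> conj_part lam j \<in> cyclic_periods (column_word lam)"
proof (induction lam arbitrary: j rule: column_word.induct)
  case (1 lam)
  show ?case
  proof (cases "sum_list lam = 0")
    case True
    then show ?thesis using conj_part_eq_0[OF True "1.prems"] zero_in_cyclic_periods by simp
  next
    case False
    define mu where "mu = map (\<lambda>x. x - 1) lam"
    have word: "column_word lam = [0..<conj_part lam 1] @ column_word mu"
      using column_word_pos[OF False] unfolding mu_def .
    have letters: "set (column_word mu) \<subseteq> {..<conj_part lam 1}"
      using set_column_word[of mu] conj_part_map_pred_le[of lam] unfolding mu_def by auto
    show ?thesis
    proof (cases "j = 1")
      case True
      then show ?thesis using column_length_in_cyclic_periods[OF letters] word by simp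
    next
      case False
      then obtain i where j: "j = Suc i" "1 \<le> i" using "1.prems" by (cases j) auto
      have "conj_part mu i \<in> cyclic_periods (column_word mu)"
        using "1.IH"[OF \<open>sum_list lam \<noteq> 0\<close> j(2)] unfolding mu_def .
      moreover have "conj_part mu i \<le> length (column_word mu)"
        using conj_part_le_sum_list[OF j(2)] length_column_word by simp
      ultimately show ?thesis
        using cyclic_periods_prepend_column[OF _ letters] word conj_part_Suc[OF j(2)] j(1)
        unfolding mu_def by simp
    qed
  qed
qed

lemma d_lam_in_cyclic_periods: "d_lam lam \<in> cyclic_periods (column_word lam)"
  unfolding d_lam_def by (rule Gcd_in_cyclic_periods) (auto intro: conj_part_in_cyclic_periods)

lemma d_lam_pos:
  assumes "sum_list lam \<noteq> 0"
  shows "0 < d_lam lam"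
proof -
  have "1 \<in> {1..sum_list lam}" using assms unfolding atLeastAtMost_iff by linarith
  then have "d_lam lam dvd conj_part lam 1" unfolding d_lam_def by (rule Gcd_dvd[OF imageI])
  moreover have "0 < conj_part lam 1" by (rule conj_part_one_pos[OF assms])
  ultimately show ?thesis by (metis dvd_0_left gr0I less_not_refl)
qed

section \<open>Tabloids as words\<close>

definition shape_words :: "nat \<Rightarrow> nat list \<Rightarrow> nat list set" where
  "shape_words n lam = {w. length w = n \<and>
     (\<forall>r. count (mset w) r = (if r < length lam then lam ! r else 0))}"

definition tabloid_of_word :: "nat \<Rightarrow> nat list \<Rightarrow> nat list \<Rightarrow> nat set list" where
  "tabloid_of_word n lam w = map (\<lambda>r. {i. i < n \<and> w ! i = r}) [0..<length lam]"

lemma nth_tabloid_of_word: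
  "r < length lam \<Longrightarrow> tabloid_of_word n lam w ! r = {i. i < n \<and> w ! i = r}"
  unfolding tabloid_of_word_def by simp

lemma length_shape_word: "w \<in> shape_words n lam \<Longrightarrow> length w = n"
  unfolding shape_words_def by simp

lemma shape_word_letter_less:
  assumes w: "w \<in> shape_words n lam" and "i < n"
  shows "w ! i < length lam"
proof -
  have "0 < count (mset w) (w ! i)" using length_shape_word[OF w] \<open>i < n\<close> by simp
  moreover have "count (mset w) (w ! i) = (if w ! i < length lam then lam ! (w ! i) else 0)"
    using w unfolding shape_words_def by blast
  ultimately show ?thesis by (simp split: if_splits)
qed

lemma card_positions_eq_count: "card {i. i < length w \<and> w ! i = r} = count (mset w) r"
  by (simp add: count_mset count_list_eq_length_filter length_filter_conv_card eq_commute)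

lemma shape_word_swap:
  assumes w: "w \<in> shape_words n lam" and "i < n" "j < n"
  shows "w[i := w ! j, j := w ! i] \<in> shape_words n lam"
  using w mset_swap[of j w i] assms(2,3) unfolding shape_words_def by simp

lemma column_word_in_shape_words: "is_partition lam n \<Longrightarrow> column_word lam \<in> shape_words n lam"
  unfolding is_partition_def shape_words_def using count_column_word length_column_word by simp

lemma tabloid_of_word_in_tabloids:
  assumes w: "w \<in> shape_words n lam"
  shows "tabloid_of_word n lam w \<in> tabloids n lam"
  unfolding tabloids_def
proof (intro CollectI conjI allI impI)
  show "length (tabloid_of_word n lam w) = length lam"
    by (simp add: tabloid_of_word_def)
  show "card (tabloid_of_word n lam w ! r) = lam ! r" if "r < length lam" for r
    using card_positions_eq_count[of w r] w that
    unfolding nth_tabloid_of_word[OF that] shape_words_def by simp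
  show "tabloid_of_word n lam w ! r \<inter> tabloid_of_word n lam w ! s = {}"
    if "r < length lam" "s < length lam" "r \<noteq> s" for r s
    using that by (auto simp: nth_tabloid_of_word)
  show "\<Union> (set (tabloid_of_word n lam w)) = {0..<n}"
    using shape_word_letter_less[OF w] unfolding tabloid_of_word_def by auto
qed

lemma tabloid_row_unique:
  assumes T: "T \<in> tabloids n lam" and "i < n"
  shows "\<exists>!r. r < length lam \<and> i \<in> T ! r"
proof -
  have "i \<in> \<Union> (set T)" and len: "length T = length lam"
    using assms unfolding tabloids_def by simp_all
  then obtain r where "r < length lam" "i \<in> T ! r"
    by (metis UnionE in_set_conv_nth)
  moreover have "r = s" if "r < length lam" "s < length lam" "i \<in> T ! r" "i \<in> T ! s" for r s
    using T that unfolding tabloids_def by blast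
  ultimately show ?thesis by blast
qed

lemma tabloid_of_word_surj:
  assumes T: "T \<in> tabloids n lam"
  shows "\<exists>w \<in> shape_words n lam. tabloid_of_word n lam w = T"
proof -
  have lenT: "length T = length lam" and cardT: "\<And>r. r < length lam \<Longrightarrow> card (T ! r) = lam ! r"
    and unionT: "\<Union> (set T) = {0..<n}"
    using T unfolding tabloids_def by auto
  define w where "w = map (\<lambda>i. THE r. r < length lam \<and> i \<in> T ! r) [0..<n]"
  have len: "length w = n" unfolding w_def by simp
  have row: "w ! i < length lam \<and> i \<in> T ! (w ! i)" if "i < n" for i
    using theI'[OF tabloid_row_unique[OF T that]] that unfolding w_def by simp
  have rows: "tabloid_of_word n lam w ! r = T ! r" if r: "r < length lam" for r
  proof
    show "tabloid_of_word n lam w ! r \<subseteq> T ! r"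
      using row unfolding nth_tabloid_of_word[OF r] by auto
    show "T ! r \<subseteq> tabloid_of_word n lam w ! r"
    proof
      fix t assume t: "t \<in> T ! r"
      then have "t < n" using unionT r lenT by (metis UnionI atLeastLessThan_iff nth_mem)
      then have "w ! t = r" using row tabloid_row_unique[OF T] t r by blast
      then show "t \<in> tabloid_of_word n lam w ! r" using \<open>t < n\<close> nth_tabloid_of_word[OF r] by simp
    qed
  qed
  have "length (tabloid_of_word n lam w) = length T" by (simp add: tabloid_of_word_def lenT)
  then have TW: "tabloid_of_word n lam w = T"
    using rows lenT by (simp add: nth_equalityI)
  have "count (mset w) r = (if r < length lam then lam ! r else 0)" for r
  proof (cases "r < length lam")
    case True
    then show ?thesis
      using card_positions_eq_count[of w r] cardT[OF True] rows[OF True] nth_tabloid_of_word[OF True] len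
      by simp
  next
    case False
    then have "r \<notin> set w" using row len by (auto simp: in_set_conv_nth)
    then show ?thesis using False by simp
  qed
  then have "w \<in> shape_words n lam" using len unfolding shape_words_def by blast
  then show ?thesis using TW by blast
qed

lemma strictly_higher_tabloid_of_word:
  assumes w: "w \<in> shape_words n lam" and "a < n" "b < n"
  shows "strictly_higher (tabloid_of_word n lam w) a b \<longleftrightarrow> w ! a < w ! b"
proof
  assume "strictly_higher (tabloid_of_word n lam w) a b"
  then obtain r s where "r < s" "s < length lam"
    "a \<in> tabloid_of_word n lam w ! r" "b \<in> tabloid_of_word n lam w ! s"
    unfolding strictly_higher_def tabloid_of_word_def by auto
  then show "w ! a < w ! b" by (simp add: nth_tabloid_of_word)
next
  assume "w ! a < w ! b"
  moreover have "w ! b < length lam" using shape_word_letter_less[OF w \<open>b < n\<close>] .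
  ultimately show "strictly_higher (tabloid_of_word n lam w) a b"
    unfolding strictly_higher_def using assms(2,3)
    by (intro exI[of _ "w ! a"] exI[of _ "w ! b"]) (simp add: tabloid_of_word_def)
qed

lemma in_tau_tabloid_of_word:
  assumes w: "w \<in> shape_words n lam" and i: "i < n"
  shows "i \<in> tau n (tabloid_of_word n lam w) \<longleftrightarrow> w ! i < w ! res_succ n i"
proof -
  have "res_succ n i < n" unfolding res_succ_def using i by simp
  then show ?thesis
    unfolding tau_def using strictly_higher_tabloid_of_word[OF w i] i by simp
qed

lemma exchange_tabloid_of_word:
  assumes w: "w \<in> shape_words n lam" and i: "i < n" and j: "j = res_succ n i"
  shows "tabloid_of_word n lam (w[i := w ! j, j := w ! i]) = exchange n i (tabloid_of_word n lam w)"
proof -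
  have "j < n" unfolding j res_succ_def using i by simp
  have swap_lt: "swap_el i j t < n \<longleftrightarrow> t < n" for t
    using i \<open>j < n\<close> by (auto simp: swap_el_def)
  have nth_swap: "w[i := w ! j, j := w ! i] ! t = w ! swap_el i j t" if "t < n" for t
    using that length_shape_word[OF w] i \<open>j < n\<close>
    by (cases "t = j"; cases "t = i") (simp_all add: swap_el_def)
  have "swap_el i j ` {t. t < n \<and> w ! t = r} = {t. t < n \<and> w[i := w ! j, j := w ! i] ! t = r}" for r
    unfolding image_involution_Collect[of "swap_el i j", OF swap_el_involution] swap_lt
    using nth_swap by (metis (no_types, lifting))
  then show ?thesis
    unfolding exchange_def tabloid_of_word_def j[symmetric] by simp
qed

section \<open>Cyclic Knuth steps are Knuth moves\<close>

text \<open>Exactly one of the two sets tau contains i; the neighbour h (first case) or j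
  (second case) lies in exactly the other one.\<close>

lemma adjacent_swap_knuth_edge:
  assumes w: "w \<in> shape_words n lam" and i: "i < n" and j: "j = res_succ n i"
    and ne: "w ! i \<noteq> w ! j" and h: "h < n" "h \<noteq> i" "h \<noteq> j"
    and between:
      "(res_succ n h = i \<and> min (w ! i) (w ! j) \<le> w ! h \<and> w ! h < max (w ! i) (w ! j))
     \<or> (h = res_succ n j \<and> min (w ! i) (w ! j) < w ! h \<and> w ! h \<le> max (w ! i) (w ! j))"
  shows "(tabloid_of_word n lam w, tabloid_of_word n lam (w[i := w ! j, j := w ! i]))
    \<in> knuth_edges n lam"
proof -
  define w' where "w' = w[i := w ! j, j := w ! i]"
  let ?T = "tau n (tabloid_of_word n lam w)" and ?T' = "tau n (tabloid_of_word n lam w')"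
  have "j < n" unfolding j res_succ_def using i by simp
  have "i \<noteq> j" using ne by blast
  have len: "length w = n" by (rule length_shape_word[OF w])
  have w': "w' \<in> shape_words n lam"
    unfolding w'_def by (rule shape_word_swap[OF w i \<open>j < n\<close>])
  have w'_nth: "w' ! i = w ! j" "w' ! j = w ! i" "w' ! h = w ! h"
    unfolding w'_def using len i \<open>j < n\<close> h \<open>i \<noteq> j\<close> by (simp_all add: nth_list_update)
  have i_in: "i \<in> ?T \<longleftrightarrow> w ! i < w ! j" "i \<in> ?T' \<longleftrightarrow> w ! j < w ! i"
    using in_tau_tabloid_of_word[OF w i] in_tau_tabloid_of_word[OF w' i] w'_nth
    unfolding j[symmetric] by simp_all
  have "\<not> ?T \<subseteq> ?T' \<and> \<not> ?T' \<subseteq> ?T"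
    using between
  proof
    assume *: "res_succ n h = i \<and> min (w ! i) (w ! j) \<le> w ! h \<and> w ! h < max (w ! i) (w ! j)"
    then have "h \<in> ?T \<longleftrightarrow> w ! h < w ! i" "h \<in> ?T' \<longleftrightarrow> w ! h < w ! j"
      using in_tau_tabloid_of_word[OF w h(1)] in_tau_tabloid_of_word[OF w' h(1)] w'_nth by simp_all
    then show ?thesis using * i_in ne by (cases "w ! i < w ! j") (auto simp: min_def max_def)
  next
    assume *: "h = res_succ n j \<and> min (w ! i) (w ! j) < w ! h \<and> w ! h \<le> max (w ! i) (w ! j)"
    then have "j \<in> ?T \<longleftrightarrow> w ! j < w ! h" "j \<in> ?T' \<longleftrightarrow> w ! i < w ! h"
      using in_tau_tabloid_of_word[OF w \<open>j < n\<close>] in_tau_tabloid_of_word[OF w' \<open>j < n\<close>] w'_nth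
      by simp_all
    then show ?thesis using * i_in ne by (cases "w ! i < w ! j") (auto simp: min_def max_def)
  qed
  moreover have "tabloid_of_word n lam w' = exchange n i (tabloid_of_word n lam w)"
    unfolding w'_def by (rule exchange_tabloid_of_word[OF w i j])
  ultimately have "knuth_move n (tabloid_of_word n lam w) (tabloid_of_word n lam w')"
    unfolding knuth_move_def using i by auto
  then show ?thesis
    using tabloid_of_word_in_tabloids[OF w] tabloid_of_word_in_tabloids[OF w']
    unfolding knuth_edges_def w'_def by blast
qed

lemma cyclic_knuth_step_knuth_edge:
  assumes w: "w \<in> shape_words n lam" and step: "cyclic_knuth_step w w'"
  shows "(tabloid_of_word n lam w, tabloid_of_word n lam w') \<in> knuth_edges n lam"
proof -
  obtain k where "knuth_step (rotate k w) (rotate k w')"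
    using step unfolding cyclic_knuth_step_def by blast
  have len: "length w = n" by (rule length_shape_word[OF w])
  let ?R = "rotate k w"
  obtain u h where u: "Suc u < n" and h: "h < n"
    and R': "rotate k w' = ?R[u := ?R ! Suc u, Suc u := ?R ! u]" and ne: "?R ! u \<noteq> ?R ! Suc u"
    and between:
      "(Suc h = u \<and> min (?R ! u) (?R ! Suc u) \<le> ?R ! h \<and> ?R ! h < max (?R ! u) (?R ! Suc u))
     \<or> (h = Suc (Suc u) \<and> min (?R ! u) (?R ! Suc u) < ?R ! h \<and> ?R ! h \<le> max (?R ! u) (?R ! Suc u))"
    by (rule knuth_step_adjacent_swap[OF \<open>knuth_step ?R (rotate k w')\<close>]) (use len in auto)
  define i where "i = (k + u) mod n"
  define j where "j = (k + Suc u) mod n"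
  define g where "g = (k + h) mod n"
  have letters: "?R ! u = w ! i" "?R ! Suc u = w ! j" "?R ! h = w ! g"
    using u h len unfolding i_def j_def g_def by (simp_all add: nth_rotate)
  have w': "w' = w[i := w ! j, j := w ! i]"
    using R' rotate_adjacent_swap[OF len u, of k] rotate_inj unfolding i_def j_def by metis
  have ij: "i < n" "j = res_succ n i" and g: "g < n" "g \<noteq> i" "g \<noteq> j"
    using u h between mod_add_left_inj[where k = k and t = h and u = u and n = n]
      mod_add_left_inj[where k = k and t = h and u = "Suc u" and n = n]
    unfolding i_def j_def g_def by (auto simp: res_succ_mod)
  have "Suc h = u \<Longrightarrow> res_succ n g = i" "h = Suc (Suc u) \<Longrightarrow> g = res_succ n j"
    unfolding i_def j_def g_def by (auto simp: res_succ_mod)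
  then have "(res_succ n g = i \<and> min (w ! i) (w ! j) \<le> w ! g \<and> w ! g < max (w ! i) (w ! j))
     \<or> (g = res_succ n j \<and> min (w ! i) (w ! j) < w ! g \<and> w ! g \<le> max (w ! i) (w ! j))"
    using between unfolding letters by blast
  from adjacent_swap_knuth_edge[OF w ij _ g this] show ?thesis
    using ne unfolding letters w' by blast
qed

lemma cyclic_knuth_equiv_knuth_path:
  assumes "cyclic_knuth_equiv w w'" and "w \<in> shape_words n lam"
  shows "(tabloid_of_word n lam w, tabloid_of_word n lam w') \<in> (knuth_edges n lam)\<^sup>*"
  using assms
proof (induction rule: rtranclp_induct)
  case base
  then show ?case by simp
next
  case (step v v')
  have "v \<in> shape_words n lam"
    using step.prems cyclic_knuth_equiv_mset[OF step.hyps(1)] mset_eq_length[of v w]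
    unfolding shape_words_def by auto
  then show ?case
    using step cyclic_knuth_step_knuth_edge by (meson rtrancl.rtrancl_into_rtrancl)
qed

lemma sym_knuth_edges: "sym (knuth_edges n lam)"
  unfolding sym_def knuth_edges_def by auto

lemma shape_word_reaches_rotation:
  assumes w: "w \<in> shape_words n lam" and W: "W \<in> shape_words n lam"
    and d: "d \<in> cyclic_periods W" "0 < d"
  shows "\<exists>m<d. cyclic_knuth_equiv w (rotate m W)"
proof -
  have "mset w = mset W" using w W unfolding shape_words_def by (simp add: multiset_eq_iff)
  then obtain m where "cyclic_knuth_equiv w (rotate m W)"
    using cyclic_knuth_equiv_rotation_if_mset_eq by blast
  then have "cyclic_knuth_equiv w (rotate (m mod d) W)"
    using cyclic_knuth_equiv_rotate_mod[OF d(1)] by (rule rtranclp_trans)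
  then show ?thesis using d(2) mod_less_divisor by blast
qed

lemma tabloid_reaches_rotation:
  assumes T: "T \<in> tabloids n lam" and W: "W \<in> shape_words n lam"
    and d: "d \<in> cyclic_periods W" "0 < d"
  shows "\<exists>m<d. (T, tabloid_of_word n lam (rotate m W)) \<in> (knuth_edges n lam)\<^sup>*"
proof -
  obtain w where w: "w \<in> shape_words n lam" and Tw: "tabloid_of_word n lam w = T"
    using tabloid_of_word_surj[OF T] by blast
  obtain m where "m < d" "cyclic_knuth_equiv w (rotate m W)"
    using shape_word_reaches_rotation[OF w W d] by blast
  then show ?thesis using cyclic_knuth_equiv_knuth_path[OF _ w] Tw by blast
qed

theorem proposition8p2:
  fixes n :: nat and lam :: "nat list"
  assumes "n \<ge> 1" and "is_partition lam n"
  shows "num_components n lam \<le> d_lam lam"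
proof -
  define W where "W = column_word lam"
  have W: "W \<in> shape_words n lam"
    unfolding W_def by (rule column_word_in_shape_words[OF assms(2)])
  have "sum_list lam = n" using assms(2) unfolding is_partition_def by simp
  then have d: "d_lam lam \<in> cyclic_periods W" "0 < d_lam lam"
    using d_lam_in_cyclic_periods d_lam_pos[of lam] assms(1) unfolding W_def by auto
  let ?reps = "(\<lambda>m. tabloid_of_word n lam (rotate m W)) ` {..<d_lam lam}"
  have "\<forall>T\<in>tabloids n lam. \<exists>T'\<in>?reps. (T, T') \<in> (knuth_edges n lam)\<^sup>*"
    using tabloid_reaches_rotation[OF _ W d] by blast
  then have "num_components n lam \<le> card ?reps"
    unfolding num_components_def by (rule card_quotient_rtrancl_le[OF sym_knuth_edges, rotated]) simp
  also have "\<dots> \<le> d_lam lam" using card_image_le[of "{..<d_lam lam}"] by simp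
  finally show ?thesis .
qed

end
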